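(* Let $a_1>a_2\ge a_3\ge\cdots\ge a_n$ be real numbers in $[a,b]$, $w_1,\dots,w_n$ real weights with $w_1>0$, and $k$ a positive integer such that $\sum_{i=1}^n w_ia_i^j=0$ for all integers $0\le j<k$. Suppose at least one of the following holds: (1) the sequence $w_1,w_2,\dots,w_n$ has at most $k$ sign changes; (2) the sequence of partial sums $w_1,\ w_1+w_2,\ \dots,\ w_1+\cdots+w_n$ has at most $k-1$ sign changes; (3) the sequence whose $m$-th term ($1\le m\le n$) is $\left(\sum_{i=1}^m w_ia_i\right)-\left(\sum_{i=1}^m w_i\right)a_m$ has at most $k-2$ sign changes. Then $\sum_{i=1}^n w_if(a_i)\ge 0$ for every $k$ times differentiable $f:[a,b]\to\mathbb{R}$ with $f^{(k)}\ge 0$.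
   Context: The number of sign changes of a finite real sequence $c_1,\dots,c_N$ is the maximum integer $m$ such that there exist indices $i_1<i_2<\cdots<i_{m+1}$ with $c_{i_l}c_{i_{l+1}}<0$ for $1\le l\le m$ (zero terms are ignored). *)

theory Defs
  imports Complex_Main
begin

text \<open>A finite real sequence c_1,...,c_N is represented by c :: nat => real together with
  its length N (only the values c 1, ..., c N matter).
  alt_chain c N m: there are indices 1 <= i_0 < i_1 < ... < i_m <= N with
  c(i_l) * c(i_(l+1)) < 0 for all l < m.\<close>
definition alt_chain :: "(nat \<Rightarrow> real) \<Rightarrow> nat \<Rightarrow> nat \<Rightarrow> bool" where
  "alt_chain c N m \<longleftrightarrow>
     (\<exists>idx :: nat \<Rightarrow> nat.
        (\<forall>l\<le>m. 1 \<le> idx l \<and> idx l \<le> N) \<and>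
        (\<forall>l<m. idx l < idx (Suc l)) \<and>
        (\<forall>l<m. c (idx l) * c (idx (Suc l)) < 0))"

text \<open>Number of sign changes: the maximal m with alt_chain c N m
  (Sup over nat; the set is finite, bounded by N, and for N = 0 it is empty and Sup = 0).\<close>
definition sign_changes :: "(nat \<Rightarrow> real) \<Rightarrow> nat \<Rightarrow> nat" where
  "sign_changes c N = Sup {m. alt_chain c N m}"

end

theory Submission
  imports Defs "HOL-Analysis.Analysis"
begin

(*
  Taylor's formula with integral remainder, together with the vanishing moments
  \<Sum> w_i x_i^j = 0 (j < k), gives
      \<Sum> w_i f(x_i) = \<integral>_a^b G_(k-1)(t) f^(k)(t) / (k-1)! dt,
  where G_p(t) = \<Sum> w_i (x_i - t)_+^p is the kernel of the nodes.  So it suffices that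
  G_(k-1) \<ge> 0.  If G_(k-1) were negative somewhere, it would change sign at least once,
  being positive just below x_1.  Sign changes can only multiply on the way down:
  G_(p+1)' = -(p+1) G_p and G_(p+1) vanishes outside (x_n, x_1), so by Rolle's theorem G_p
  has one sign change more than G_(p+1).  The piecewise affine G_1 and the step function
  G_0 pass their sign changes on to the sequence C_m of condition (3), resp. to the partial
  sums W_m of condition (2), and a discrete Rolle theorem (summation by parts) adds one
  sign change from C to W and from W to w.  Each of (1)-(3) is thus violated.
*)

(* An alternating chain with m sign changes needs m + 1 distinct indices in {1..N}. *)
lemma alt_chain_length_bound:
  assumes "alt_chain c N m"
  shows "m < N"
proof -
  obtain idx where range: "\<forall>l\<le>m. 1 \<le> idx l \<and> idx l \<le> N"
    and incr: "\<forall>l<m. idx l < idx (Suc l)"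
    using assms unfolding alt_chain_def by blast
  have "l \<le> m \<Longrightarrow> idx 0 + l \<le> idx l" for l
    by (induction l) (use incr in \<open>auto simp: Suc_le_eq intro: le_less_trans\<close>)
  then show ?thesis using range[rule_format, of 0] range[rule_format, of m] by fastforce
qed

lemma sign_changes_ge:
  assumes "alt_chain c N m"
  shows "m \<le> sign_changes c N"
  unfolding sign_changes_def
proof (rule cSup_upper)
  show "m \<in> {m. alt_chain c N m}" using assms by simp
  show "bdd_above {m. alt_chain c N m}"
    by (rule bdd_aboveI[of _ N]) (auto dest: alt_chain_length_bound)
qed

definition alternating :: "(nat \<Rightarrow> real) \<Rightarrow> nat \<Rightarrow> bool" where
  "alternating e m \<longleftrightarrow> (\<forall>l<m. e l * e (Suc l) < 0)"

lemma alternating_nonzero: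
  assumes "alternating e m" "1 \<le> m" "l \<le> m"
  shows "e l \<noteq> 0"
proof (cases "l < m")
  case True
  then show ?thesis using assms(1) unfolding alternating_def by fastforce
next
  case False
  then have "l = Suc (m - 1)" "m - 1 < m" using assms(2,3) by auto
  then show ?thesis using assms(1) unfolding alternating_def by (metis mult_zero_right order_less_irrefl)
qed

lemma opposite_signs_transfer:
  fixes u v U V :: real
  assumes "u * U > 0" "v * V > 0" "U * V < 0"
  shows "u * v < 0"
  using assms by (smt (verit, best) mult_less_0_iff zero_less_mult_iff)

lemma increments_around_turn:
  fixes p u v :: real
  assumes "p * u \<le> 0" "u * v \<le> 0" "u \<noteq> 0"
  shows "(u - p) * (v - u) < 0"
  using assms by (smt (verit, best) mult_le_0_iff mult_less_0_iff)

(* The sequence 0, e_0, ..., e_m, 0 (indices 0 .. m+2).  Both Rolle arguments compare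
   the increments of an alternating sequence padded by zeros at both ends. *)
definition pad :: "(nat \<Rightarrow> real) \<Rightarrow> nat \<Rightarrow> nat \<Rightarrow> real" where
  "pad e m j = (if j = 0 \<or> j = Suc (Suc m) then 0 else e (j - 1))"

lemma pad_increments_alternate:
  assumes alt: "alternating e m" and m: "1 \<le> m" and l: "l \<le> m"
  shows "(pad e m (Suc l) - pad e m l) * (pad e m (Suc (Suc l)) - pad e m (Suc l)) < 0"
proof -
  have left: "pad e m l * e l \<le> 0"
    using alt l by (cases l) (auto simp: pad_def alternating_def intro: less_imp_le)
  have right: "e l * pad e m (Suc (Suc l)) \<le> 0"
    using alt l by (auto simp: pad_def alternating_def intro: less_imp_le)
  have "pad e m (Suc l) = e l" using l by (simp add: pad_def)
  then show ?thesis
    using increments_around_turn[OF left right alternating_nonzero[OF alt m l]] by simp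
qed

lemma pad_increment_nonzero:
  assumes "alternating e m" "1 \<le> m" "l \<le> Suc m"
  shows "pad e m (Suc l) - pad e m l \<noteq> 0"
proof (cases "l \<le> m")
  case True
  then show ?thesis using pad_increments_alternate[OF assms(1,2) True] by auto
next
  case False
  then have "l = Suc m" using assms(3) by simp
  then show ?thesis using pad_increments_alternate[OF assms(1,2), of m] by auto
qed

definition knots :: "'a \<Rightarrow> 'a \<Rightarrow> (nat \<Rightarrow> 'a) \<Rightarrow> nat \<Rightarrow> nat \<Rightarrow> 'a" where
  "knots lo hi t m j = (if j = 0 then lo else if j = Suc (Suc m) then hi else t (j - 1))"

lemma pad_knots:
  assumes "g lo = 0" "g hi = 0"
  shows "g (knots lo hi t m j) = pad (\<lambda>l. g (t l)) m j"
  using assms by (simp add: knots_def pad_def)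

lemma alternation_from_increment_signs:
  fixes s \<tau> :: "nat \<Rightarrow> 'a::linorder" and h :: "'a \<Rightarrow> real"
  assumes alt: "alternating e m" and m: "1 \<le> m"
    and sgn: "\<And>l. l \<le> Suc m \<Longrightarrow>
               \<tau> l \<le> s l \<and> s l < \<tau> (Suc l) \<and> h (s l) * (pad e m (Suc l) - pad e m l) > 0"
  shows "\<forall>l<Suc m. s l < s (Suc l)" and "alternating (\<lambda>l. h (s l)) (Suc m)"
proof -
  show "\<forall>l<Suc m. s l < s (Suc l)"
  proof (intro allI impI)
    fix l assume "l < Suc m"
    then show "s l < s (Suc l)" using sgn[of l] sgn[of "Suc l"] by force
  qed
  show "alternating (\<lambda>l. h (s l)) (Suc m)"
    unfolding alternating_def
  proof (intro allI impI)
    fix l assume "l < Suc m"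
    then show "h (s l) * h (s (Suc l)) < 0"
      using opposite_signs_transfer[OF sgn[of l, THEN conjunct2, THEN conjunct2]
          sgn[of "Suc l", THEN conjunct2, THEN conjunct2] pad_increments_alternate[OF alt m]]
      by simp
  qed
qed

definition real_alt_chain :: "(real \<Rightarrow> real) \<Rightarrow> nat \<Rightarrow> bool" where
  "real_alt_chain g m \<longleftrightarrow> (\<exists>t. (\<forall>l<m. t l < t (Suc l)) \<and> alternating (\<lambda>l. g (t l)) m)"

lemma real_alt_chain_scale:
  assumes "real_alt_chain (\<lambda>t. c * h t) m"
  shows "real_alt_chain h m"
proof -
  have "h u * h v < 0" if "(c * h u) * (c * h v) < 0" for u v
  proof -
    have "(c * c) * (h u * h v) < 0" using that by (simp add: algebra_simps)
    then show ?thesis by (auto simp: mult_less_0_iff)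
  qed
  then show ?thesis using assms unfolding real_alt_chain_def alternating_def by blast
qed

lemma real_alt_chain_one:
  assumes "g u < 0" "g v > 0"
  shows "real_alt_chain g 1"
proof (cases "u < v")
  case True
  then show ?thesis unfolding real_alt_chain_def alternating_def
    by (intro exI[of _ "\<lambda>l. if l = 0 then u else v"]) (use assms in \<open>auto simp: mult_neg_pos\<close>)
next
  case False
  then have "v < u" using assms by (metis linorder_neqE_linordered_idom order_less_asym)
  then show ?thesis unfolding real_alt_chain_def alternating_def
    by (intro exI[of _ "\<lambda>l. if l = 0 then v else u"]) (use assms in \<open>auto simp: mult_pos_neg\<close>)
qed

lemma mvt_sign_witness:
  fixes g h :: "real \<Rightarrow> real"
  assumes ab: "a < b" and deriv: "\<And>t. (g has_real_derivative h t) (at t)"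
    and differ: "g b - g a \<noteq> 0"
  shows "\<exists>z. a < z \<and> z < b \<and> h z * (g b - g a) > 0"
proof -
  obtain z where z: "a < z" "z < b" and mvt: "g b - g a = (b - a) * h z"
    using MVT2[OF ab, of g h] deriv by metis
  then have "h z \<noteq> 0" using differ by auto
  then have square: "h z * h z > 0" by (metis not_real_square_gt_zero)
  have "h z * (g b - g a) = (b - a) * (h z * h z)"
    unfolding mvt by (simp add: algebra_simps)
  moreover have "(b - a) * (h z * h z) > 0" using mult_pos_pos[OF _ square, of "b - a"] ab by simp
  ultimately have "h z * (g b - g a) > 0" by linarith
  then show ?thesis using z by blast
qed

(* The mean value theorem on each of the m + 2
   intervals between the knots \<alpha>, t_0, ..., t_m, \<beta> gives a point where g' has the sign
   of the corresponding increment of g. *)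
lemma rolle_alternation:
  fixes g h :: "real \<Rightarrow> real"
  assumes chain: "real_alt_chain g m" and m: "1 \<le> m"
    and deriv: "\<And>t. (g has_real_derivative h t) (at t)"
    and zero: "g \<alpha> = 0" "g \<beta> = 0"
    and support: "\<And>t. g t \<noteq> 0 \<Longrightarrow> \<alpha> < t \<and> t < \<beta>"
  shows "real_alt_chain h (Suc m)"
proof -
  obtain t where incr: "\<forall>l<m. t l < t (Suc l)" and alt: "alternating (\<lambda>l. g (t l)) m"
    using chain unfolding real_alt_chain_def by blast
  define \<tau> where "\<tau> = knots \<alpha> \<beta> t m"
  define \<Delta> where "\<Delta> l = pad (\<lambda>l. g (t l)) m (Suc l) - pad (\<lambda>l. g (t l)) m l" for l
  have \<Delta>: "\<Delta> l = g (\<tau> (Suc l)) - g (\<tau> l)" for l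
    unfolding \<Delta>_def \<tau>_def pad_knots[of g \<alpha> \<beta>, OF zero] ..
  have nonzero: "g (t l) \<noteq> 0" if "l \<le> m" for l
    using alternating_nonzero[OF alt m that] .
  have \<tau>_incr: "\<tau> l < \<tau> (Suc l)" if "l \<le> Suc m" for l
  proof -
    have "l = 0 \<or> l = Suc m \<or> (0 < l \<and> l \<le> m)" using that by auto
    then consider "l = 0" | "l = Suc m" | "0 < l" "l \<le> m" by blast
    then show ?thesis
    proof cases
      case 1 then show ?thesis using support[OF nonzero[of 0]] by (simp add: \<tau>_def knots_def)
    next
      case 2 then show ?thesis using support[OF nonzero[of m]] m by (simp add: \<tau>_def knots_def)
    next
      case 3 then show ?thesis using incr[rule_format, of "l - 1"] by (simp add: \<tau>_def knots_def)
    qed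
  qed
  have "\<exists>z. \<tau> l < z \<and> z < \<tau> (Suc l) \<and> h z * \<Delta> l > 0" if l: "l \<le> Suc m" for l
    using mvt_sign_witness[OF \<tau>_incr[OF l] deriv] pad_increment_nonzero[OF alt m l]
    unfolding \<Delta> \<Delta>_def[symmetric] by simp
  then obtain s where s: "\<And>l. l \<le> Suc m \<Longrightarrow> \<tau> l < s l \<and> s l < \<tau> (Suc l) \<and> h (s l) * \<Delta> l > 0"
    by metis
  have "\<tau> l \<le> s l \<and> s l < \<tau> (Suc l) \<and>
      h (s l) * (pad (\<lambda>l. g (t l)) m (Suc l) - pad (\<lambda>l. g (t l)) m l) > 0" if "l \<le> Suc m" for l
    using s[OF that] unfolding \<Delta>_def by auto
  from alternation_from_increment_signs[OF alt m this] show ?thesis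
    unfolding real_alt_chain_def by blast
qed

lemma sum_sign_witness:
  fixes d \<delta> :: "nat \<Rightarrow> real"
  assumes "finite A" "(\<Sum>j\<in>A. d j * \<delta> j) = S" "S \<noteq> 0" "\<And>j. j \<in> A \<Longrightarrow> \<delta> j \<ge> 0"
  shows "\<exists>j\<in>A. d j * S > 0"
proof (rule ccontr)
  assume none: "\<not> ?thesis"
  have "(d j * \<delta> j) * S \<le> 0" if "j \<in> A" for j
  proof -
    have "d j * S \<le> 0" using none that by auto
    then have "\<delta> j * (d j * S) \<le> 0" by (rule mult_nonneg_nonpos[OF assms(4)[OF that]])
    then show ?thesis by (simp add: algebra_simps)
  qed
  then have "(\<Sum>j\<in>A. d j * \<delta> j) * S \<le> 0"
    unfolding sum_distrib_right by (rule sum_nonpos)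
  then have "S * S \<le> 0" using assms(2) by simp
  then show False using assms(3) by (metis not_real_square_gt_zero not_le)
qed

lemma discrete_rolle_alternation:
  fixes c d \<delta> :: "nat \<Rightarrow> real"
  assumes incr: "\<And>j. lo \<le> j \<Longrightarrow> j < hi \<Longrightarrow> c (Suc j) - c j = d j * \<delta> j"
    and nonneg: "\<And>j. lo \<le> j \<Longrightarrow> j < hi \<Longrightarrow> \<delta> j \<ge> 0"
    and zero: "c lo = 0" "c hi = 0"
    and range: "\<And>l. l \<le> m \<Longrightarrow> lo \<le> idx l \<and> idx l \<le> hi"
    and idx_incr: "\<And>l. l < m \<Longrightarrow> idx l < idx (Suc l)"
    and alt: "alternating (\<lambda>l. c (idx l)) m" and m: "1 \<le> m"
  obtains idx' where "\<And>l. l \<le> Suc m \<Longrightarrow> lo \<le> idx' l \<and> idx' l < hi"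
    and "\<And>l. l < Suc m \<Longrightarrow> idx' l < idx' (Suc l)"
    and "alternating (\<lambda>l. d (idx' l)) (Suc m)"
proof -
  define \<tau> where "\<tau> = knots lo hi idx m"
  define \<Delta> where "\<Delta> l = pad (\<lambda>l. c (idx l)) m (Suc l) - pad (\<lambda>l. c (idx l)) m l" for l
  have \<Delta>: "\<Delta> l = c (\<tau> (Suc l)) - c (\<tau> l)" for l
    unfolding \<Delta>_def \<tau>_def pad_knots[of c lo hi, OF zero] ..
  have \<tau>_range: "lo \<le> \<tau> l \<and> \<tau> l \<le> hi" if "l \<le> Suc (Suc m)" for l
    using that range[of "l - 1"] range[of 0] by (auto simp: \<tau>_def knots_def)
  have \<tau>_mono: "\<tau> l \<le> \<tau> (Suc l)" if "l \<le> Suc m" for l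
    using that range[of 0] range[of m] idx_incr[of "l - 1"]
    by (auto simp: \<tau>_def knots_def intro: less_imp_le)
  have "\<exists>j\<in>{\<tau> l..<\<tau> (Suc l)}. d j * \<Delta> l > 0" if l: "l \<le> Suc m" for l
  proof (rule sum_sign_witness)
    show "(\<Sum>j\<in>{\<tau> l..<\<tau> (Suc l)}. d j * \<delta> j) = \<Delta> l"
      unfolding \<Delta> sum_Suc_diff'[OF \<tau>_mono[OF l], symmetric]
      using \<tau>_range[of l] \<tau>_range[of "Suc l"] l by (intro sum.cong) (auto simp: incr)
    show "\<Delta> l \<noteq> 0" unfolding \<Delta>_def using pad_increment_nonzero[OF alt m l] .
    show "\<delta> j \<ge> 0" if "j \<in> {\<tau> l..<\<tau> (Suc l)}" for j
      using that \<tau>_range[of l] \<tau>_range[of "Suc l"] l by (auto intro: nonneg)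
  qed simp
  then have "\<forall>l. \<exists>j. l \<le> Suc m \<longrightarrow> \<tau> l \<le> j \<and> j < \<tau> (Suc l) \<and> d j * \<Delta> l > 0"
    by (meson atLeastLessThan_iff)
  then obtain s where s: "\<And>l. l \<le> Suc m \<Longrightarrow> \<tau> l \<le> s l \<and> s l < \<tau> (Suc l) \<and> d (s l) * \<Delta> l > 0"
    by metis
  have "\<tau> l \<le> s l \<and> s l < \<tau> (Suc l) \<and>
      d (s l) * (pad (\<lambda>l. c (idx l)) m (Suc l) - pad (\<lambda>l. c (idx l)) m l) > 0" if "l \<le> Suc m" for l
    using s[OF that] unfolding \<Delta>_def by auto
  note interleaved = alternation_from_increment_signs[OF alt m this]
  show ?thesis
  proof (rule that[of s])
    fix l assume "l \<le> Suc m"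
    then show "lo \<le> s l \<and> s l < hi" using s[of l] \<tau>_range[of l] \<tau>_range[of "Suc l"] by force
  qed (use interleaved in auto)
qed

lemma alt_chain_reversed:
  fixes g :: "'a \<Rightarrow> real" and c :: "nat \<Rightarrow> real"
  assumes alt: "alternating (\<lambda>l. g (t l)) r"
    and range: "\<And>l. l \<le> r \<Longrightarrow> 1 \<le> \<iota> l \<and> \<iota> l \<le> N"
    and anti: "\<And>l. l < r \<Longrightarrow> \<iota> (Suc l) \<le> \<iota> l"
    and same_sign: "\<And>l. l \<le> r \<Longrightarrow> c (\<iota> l) * g (t l) > 0"
  shows "alt_chain c N r"
proof -
  have opposite: "c (\<iota> l) * c (\<iota> (Suc l)) < 0" if "l < r" for l
    using opposite_signs_transfer[OF same_sign[of l] same_sign[of "Suc l"]] alt that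
    unfolding alternating_def by simp
  have strict: "\<iota> (Suc l) < \<iota> l" if "l < r" for l
  proof -
    have "\<iota> (Suc l) \<noteq> \<iota> l"
      using opposite[OF that] not_square_less_zero by force
    then show ?thesis using anti[OF that] by simp
  qed
  show ?thesis unfolding alt_chain_def
  proof (intro exI[of _ "\<lambda>l. \<iota> (r - l)"] conjI allI impI)
    fix l assume "l \<le> r"
    then show "1 \<le> \<iota> (r - l)" "\<iota> (r - l) \<le> N" using range[of "r - l"] by auto
  next
    fix l assume l: "l < r"
    then have e: "r - l = Suc (r - Suc l)" "r - Suc l < r" by auto
    show "\<iota> (r - l) < \<iota> (r - Suc l)" unfolding e(1) using strict[OF e(2)] .
    show "c (\<iota> (r - l)) * c (\<iota> (r - Suc l)) < 0"
      unfolding e(1) using opposite[OF e(2)] by (simp add: mult.commute)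
  qed
qed

(* Signs of an affine function s \<mapsto> A - B s between two points, obtained from writing its
   value at y as a convex combination of its values at p and q. *)
lemma affine_convex_combination:
  fixes A B p q y :: real
  shows "(q - p) * (A - B * y) = (q - y) * (A - B * p) + (y - p) * (A - B * q)"
  by (simp add: algebra_simps)

lemma affine_same_sign_between:
  fixes A B p q y :: real
  assumes "p < q" "p \<le> y" "y \<le> q" "(A - B * p) * (A - B * q) > 0"
  shows "(A - B * y) * (A - B * p) > 0"
proof -
  have "(A - B * p) * (A - B * p) > 0"
    using assms(4) by (metis mult_zero_left not_real_square_gt_zero order_less_irrefl)
  moreover have "(A - B * q) * (A - B * p) > 0" using assms(4) by (simp add: mult.commute)
  ultimately have "(q - y) * ((A - B * p) * (A - B * p)) + (y - p) * ((A - B * q) * (A - B * p)) > 0"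
    using assms(1-3) by (cases "y = q") (auto intro: add_pos_nonneg)
  also have "\<dots> = (q - p) * ((A - B * y) * (A - B * p))"
    using affine_convex_combination[of q p A B y] by (simp add: algebra_simps)
  finally show ?thesis using assms(1) by (simp add: zero_less_mult_iff)
qed

lemma affine_sign_at_left:
  fixes A B p q y :: real
  assumes "p < y" "y \<le> q" "A - B * y \<noteq> 0" "(A - B * q) * (A - B * y) \<le> 0"
  shows "(A - B * p) * (A - B * y) > 0"
proof -
  have "(q - p) * ((A - B * y) * (A - B * y))
      = (q - y) * ((A - B * p) * (A - B * y)) + (y - p) * ((A - B * q) * (A - B * y))"
    using affine_convex_combination[of q p A B y] by (simp add: algebra_simps)
  moreover have "(A - B * y) * (A - B * y) > 0" using assms(3) by (metis not_real_square_gt_zero)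
  moreover have "(y - p) * ((A - B * q) * (A - B * y)) \<le> 0"
    using assms by (simp add: mult_nonneg_nonpos)
  ultimately have "(q - y) * ((A - B * p) * (A - B * y)) > 0"
    using assms(1,2) by (smt (verit) mult_pos_pos)
  then show ?thesis using assms(2) by (simp add: zero_less_mult_iff)
qed

definition trunc_pow :: "nat \<Rightarrow> real \<Rightarrow> real \<Rightarrow> real" where
  "trunc_pow p c t = (if t \<le> c then (c - t) ^ p else 0)"

lemma trunc_pow_deriv_at_node:
  assumes q: "1 \<le> q"
  shows "((\<lambda>t. trunc_pow (Suc q) c t) has_real_derivative 0) (at c)"
proof -
  have bound: "norm ((trunc_pow (Suc q) c (c + h) - trunc_pow (Suc q) c c) / h) \<le> \<bar>h\<bar> ^ q" for h
  proof (cases "h \<le> 0")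
    case True
    then have "norm ((trunc_pow (Suc q) c (c + h) - trunc_pow (Suc q) c c) / h) = \<bar>h\<bar> ^ Suc q / \<bar>h\<bar>"
      by (simp add: trunc_pow_def abs_divide power_abs)
    also have "\<dots> \<le> \<bar>h\<bar> ^ q" by (cases "h = 0") (auto simp: q)
    finally show ?thesis .
  qed (simp add: trunc_pow_def)
  have "((\<lambda>h. \<bar>h\<bar> ^ q) \<longlongrightarrow> \<bar>0::real\<bar> ^ q) (at (0::real))"
    by (intro tendsto_intros)
  then have lim: "((\<lambda>h. \<bar>h\<bar> ^ q) \<longlongrightarrow> 0) (at (0::real))"
    using q by (simp add: power_0_left)
  show ?thesis unfolding DERIV_def
    by (rule Lim_null_comparison[OF always_eventually lim]) (use bound in auto)
qed

lemma trunc_pow_deriv: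
  assumes q: "1 \<le> q"
  shows "((\<lambda>t. trunc_pow (Suc q) c t) has_real_derivative - real (Suc q) * trunc_pow q c t) (at t)"
proof -
  consider "t < c" | "c < t" | "t = c" by linarith
  then show ?thesis
  proof cases
    case 1
    have "((\<lambda>t. c - t) has_real_derivative -1) (at t)"
      by (auto intro!: derivative_eq_intros)
    from DERIV_power_Suc[OF this, of q]
    have power_deriv: "((\<lambda>t. (c - t) ^ Suc q) has_real_derivative - real (Suc q) * (c - t) ^ q) (at t)"
      by (simp add: algebra_simps)
    have near_t: "trunc_pow q c t = (c - t) ^ q" using 1 by (simp add: trunc_pow_def)
    show ?thesis unfolding near_t using power_deriv
    proof (rule has_field_derivative_transform_within_open[where S = "{..<c}"])
      fix s assume "s \<in> {..<c}" then show "(c - s) ^ Suc q = trunc_pow (Suc q) c s"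
        by (simp add: trunc_pow_def)
    qed (use 1 in \<open>auto simp: trunc_pow_def\<close>)
  next
    case 2
    have "((\<lambda>t. 0) has_real_derivative - real (Suc q) * trunc_pow q c t) (at t)"
      using 2 by (simp add: trunc_pow_def)
    then show ?thesis
    proof (rule has_field_derivative_transform_within_open[where S = "{c<..}"])
      fix s assume "s \<in> {c<..}" then show "0 = trunc_pow (Suc q) c s"
        by (simp add: trunc_pow_def)
    qed (use 2 in auto)
  next
    case 3
    then show ?thesis using trunc_pow_deriv_at_node[OF q, of c] q by (simp add: trunc_pow_def power_0_left)
  qed
qed

lemma moments_shift:
  fixes x w :: "nat \<Rightarrow> 'a::comm_ring_1"
  assumes moments: "\<And>j. j < k \<Longrightarrow> (\<Sum>i\<in>A. w i * x i ^ j) = 0" and j: "j < k"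
  shows "(\<Sum>i\<in>A. w i * (x i - t) ^ j) = 0"
proof -
  have "(\<Sum>i\<in>A. w i * (x i - t) ^ j)
      = (\<Sum>i\<in>A. \<Sum>l\<le>j. (of_nat (j choose l) * (- t) ^ (j - l)) * (w i * x i ^ l))"
    unfolding diff_conv_add_uminus binomial_ring sum_distrib_left
    by (intro sum.cong refl) (simp add: algebra_simps)
  also have "\<dots> = (\<Sum>l\<le>j. (of_nat (j choose l) * (- t) ^ (j - l)) * (\<Sum>i\<in>A. w i * x i ^ l))"
    by (subst sum.swap) (simp add: sum_distrib_left)
  also have "\<dots> = 0"
    using j moments by (intro sum.neutral) auto
  finally show ?thesis .
qed

(* Taylor's formula with integral remainder at a point y of [a, b], the remainder written as
   an integral over all of [a, b] by means of the truncated power. *)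
lemma taylor_trunc_pow:
  fixes f :: "real \<Rightarrow> real"
  assumes k: "1 \<le> k" and y: "y \<in> {a..b}" and D0: "D 0 = f"
    and deriv: "\<And>j t. j < k \<Longrightarrow> t \<in> {a..b} \<Longrightarrow>
                  (D j has_real_derivative D (Suc j) t) (at t within {a..b})"
  shows "((\<lambda>t. trunc_pow (k - 1) y t / fact (k - 1) * D k t) has_integral
           f y - (\<Sum>j<k. (y - a) ^ j / fact j * D j a)) {a..b}"
proof -
  have deriv_sub: "(D j has_vector_derivative D (Suc j) t) (at t within {a..y})"
    if "j < k" "a \<le> t" "t \<le> y" for j t
  proof -
    have "(D j has_real_derivative D (Suc j) t) (at t within {a..b})"
      using deriv[of j t] that y by simp
    then have "(D j has_real_derivative D (Suc j) t) (at t within {a..y})"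
      by (rule has_field_derivative_subset) (use y in auto)
    then show ?thesis by (simp add: has_real_derivative_iff_has_vector_derivative)
  qed
  have "((\<lambda>t. (y - t) ^ (k - 1) / fact (k - 1) * D k t) has_integral
          f y - (\<Sum>j<k. (y - a) ^ j / fact j * D j a)) (cbox a y)"
    using Taylor_has_integral[of k D f a y] k D0 deriv_sub y by auto
  then have "((\<lambda>t. if t \<in> cbox a y then (y - t) ^ (k - 1) / fact (k - 1) * D k t else 0)
               has_integral f y - (\<Sum>j<k. (y - a) ^ j / fact j * D j a)) (cbox a b)"
    by (rule has_integral_restrict_closed_subinterval) (use y in auto)
  then show ?thesis
    unfolding interval_cbox by (rule has_integral_eq[rotated]) (auto simp: trunc_pow_def)
qed

lemma peano_kernel_representation:
  fixes x w :: "nat \<Rightarrow> real" and f :: "real \<Rightarrow> real"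
  assumes A: "finite A" and k: "1 \<le> k" and nodes: "\<And>i. i \<in> A \<Longrightarrow> x i \<in> {a..b}"
    and moments: "\<And>j. j < k \<Longrightarrow> (\<Sum>i\<in>A. w i * x i ^ j) = 0"
    and D0: "D 0 = f"
    and deriv: "\<And>j t. j < k \<Longrightarrow> t \<in> {a..b} \<Longrightarrow>
                  (D j has_real_derivative D (Suc j) t) (at t within {a..b})"
  shows "((\<lambda>t. (\<Sum>i\<in>A. w i * trunc_pow (k - 1) (x i) t) * D k t / fact (k - 1))
           has_integral (\<Sum>i\<in>A. w i * f (x i))) {a..b}"
proof -
  define P where "P y = (\<Sum>j<k. (y - a) ^ j / fact j * D j a)" for y
  have "((\<lambda>t. \<Sum>i\<in>A. w i * (trunc_pow (k - 1) (x i) t / fact (k - 1) * D k t))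
          has_integral (\<Sum>i\<in>A. w i * (f (x i) - P (x i)))) {a..b}"
    unfolding P_def
    by (intro has_integral_sum A has_integral_mult_right taylor_trunc_pow k nodes D0 deriv)
  moreover have "(\<Sum>i\<in>A. w i * P (x i)) = 0"
  proof -
    have "(\<Sum>i\<in>A. w i * P (x i)) = (\<Sum>j<k. D j a / fact j * (\<Sum>i\<in>A. w i * (x i - a) ^ j))"
      unfolding P_def sum_distrib_left by (subst sum.swap) (simp add: algebra_simps)
    also have "\<dots> = 0" using moments_shift[OF moments] by simp
    finally show ?thesis .
  qed
  moreover have "(\<Sum>i\<in>A. w i * (trunc_pow (k - 1) (x i) t / fact (k - 1) * D k t))
      = (\<Sum>i\<in>A. w i * trunc_pow (k - 1) (x i) t) * D k t / fact (k - 1)" for t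
    unfolding sum_distrib_right sum_divide_distrib by (simp add: algebra_simps)
  ultimately show ?thesis by (simp add: right_diff_distrib sum_subtractf)
qed

locale ordered_weighted_nodes =
  fixes n k :: nat and x w :: "nat \<Rightarrow> real"
  assumes n2: "n \<ge> 2"
    and strict: "x 1 > x 2"
    and mono: "\<And>i. 2 \<le> i \<Longrightarrow> i < n \<Longrightarrow> x i \<ge> x (Suc i)"
    and w1: "w 1 > 0"
    and kpos: "k \<ge> 1"
    and moments: "\<And>j. j < k \<Longrightarrow> (\<Sum>i=1..n. w i * x i ^ j) = 0"
begin

definition G :: "nat \<Rightarrow> real \<Rightarrow> real" where
  "G p t = (\<Sum>i=1..n. w i * trunc_pow p (x i) t)"

definition W :: "nat \<Rightarrow> real" where
  "W = (\<lambda>m. \<Sum>i=1..m. w i)"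

definition M1 :: "nat \<Rightarrow> real" where
  "M1 m = (\<Sum>i=1..m. w i * x i)"

(* The sequence of condition (3): C_m = \<Sum>_(i\<le>m) w_i (x_i - x_m), the value at x_m of the
   affine piece of G_1 on [x_(m+1), x_m]. *)
definition C :: "nat \<Rightarrow> real" where
  "C = (\<lambda>m. (\<Sum>i=1..m. w i * x i) - (\<Sum>i=1..m. w i) * x m)"

lemma C_eq: "C m = M1 m - W m * x m"
  by (simp add: C_def M1_def W_def)

lemma C_Suc: "C (Suc m) = M1 m - W m * x (Suc m)"
  by (simp add: C_def M1_def W_def algebra_simps)

lemma x_antitone:
  assumes "1 \<le> i" "i \<le> j" "j \<le> n"
  shows "x j \<le> x i"
  using assms(2,3)
proof (induction j rule: dec_induct)
  case (step m)
  have "x (Suc m) \<le> x m"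
  proof (cases "m = 1")
    case True then show ?thesis using strict by (simp add: numeral_2_eq_2)
  next
    case False then show ?thesis using mono step assms(1) by simp
  qed
  then show ?case using step by simp
qed simp

(* The kernel vanishes to the left of all nodes (there it is a moment of order p < k) and to
   the right of them. *)
lemma G_zero_left:
  assumes "p < k" "t \<le> x n"
  shows "G p t = 0"
proof -
  have "G p t = (\<Sum>i=1..n. w i * (x i - t) ^ p)"
    unfolding G_def
  proof (intro sum.cong refl)
    fix i assume "i \<in> {1..n}"
    then have "t \<le> x i" using x_antitone[of i n] assms(2) by simp
    then show "w i * trunc_pow p (x i) t = w i * (x i - t) ^ p" by (simp add: trunc_pow_def)
  qed
  then show ?thesis using moments_shift[OF moments assms(1)] by simp
qed

lemma G_zero_right:
  assumes "x 1 < t"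
  shows "G p t = 0"
  unfolding G_def
proof (intro sum.neutral ballI)
  fix i assume "i \<in> {1..n}"
  then have "x i < t" using x_antitone[of 1 i] assms by simp
  then show "w i * trunc_pow p (x i) t = 0" by (simp add: trunc_pow_def)
qed

lemma G_zero_at_top:
  assumes "1 \<le> p"
  shows "G p (x 1) = 0"
  unfolding G_def
proof (intro sum.neutral ballI)
  fix i assume "i \<in> {1..n}"
  then have "x i \<le> x 1" using x_antitone[of 1 i] by simp
  then show "w i * trunc_pow p (x i) (x 1) = 0" using assms by (auto simp: trunc_pow_def)
qed

lemma G_support:
  assumes "p < k" "G p t \<noteq> 0"
  shows "x n < t \<and> t \<le> x 1"
  using G_zero_left[OF assms(1), of t] G_zero_right[of t p] assms(2) by force

(* Between x_2 and x_1 only the positive weight w_1 contributes. *)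
lemma G_pos_near_top: "G p ((x 1 + x 2) / 2) > 0"
proof -
  let ?t = "(x 1 + x 2) / 2"
  have "G p ?t = w 1 * trunc_pow p (x 1) ?t + (\<Sum>i=2..n. w i * trunc_pow p (x i) ?t)"
    unfolding G_def using n2 by (subst sum.atLeast_Suc_atMost) (auto simp: numeral_2_eq_2)
  also have "(\<Sum>i=2..n. w i * trunc_pow p (x i) ?t) = 0"
  proof (intro sum.neutral ballI)
    fix i assume "i \<in> {2..n}"
    then have "x i \<le> x 2" using x_antitone[of 2 i] by simp
    then show "w i * trunc_pow p (x i) ?t = 0" using strict by (simp add: trunc_pow_def)
  qed
  finally show ?thesis using w1 strict by (simp add: trunc_pow_def)
qed

lemma G_deriv:
  assumes "1 \<le> q"
  shows "(G (Suc q) has_real_derivative - real (Suc q) * G q t) (at t)"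
proof -
  have "((\<lambda>t. \<Sum>i=1..n. w i * trunc_pow (Suc q) (x i) t) has_real_derivative
          (\<Sum>i=1..n. w i * (- real (Suc q) * trunc_pow q (x i) t))) (at t)"
    by (intro DERIV_sum DERIV_cmult trunc_pow_deriv assms)
  moreover have "(\<Sum>i=1..n. w i * (- real (Suc q) * trunc_pow q (x i) t)) = - real (Suc q) * G q t"
    unfolding G_def sum_distrib_left by (intro sum.cong refl) (simp add: algebra_simps)
  ultimately show ?thesis unfolding G_def[abs_def] by simp
qed

definition cut :: "real \<Rightarrow> nat" where
  "cut t = Max {i \<in> {1..n}. t \<le> x i}"

lemma cut:
  assumes "x n < t" "t \<le> x 1"
  shows "1 \<le> cut t" "cut t < n" "\<And>i. i \<in> {1..n} \<Longrightarrow> t \<le> x i \<longleftrightarrow> i \<le> cut t"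
proof -
  let ?S = "{i \<in> {1..n}. t \<le> x i}"
  have one: "1 \<in> ?S" using assms n2 by simp
  have upper: "i \<le> cut t" if "i \<in> ?S" for i
    unfolding cut_def using that by simp
  have cut_in: "cut t \<in> ?S" unfolding cut_def using one by (intro Max_in) auto
  show "1 \<le> cut t" using upper[OF one] .
  show "cut t < n" using cut_in assms(1) by (auto simp: le_less)
  fix i assume i: "i \<in> {1..n}"
  show "t \<le> x i \<longleftrightarrow> i \<le> cut t"
  proof
    assume "i \<le> cut t"
    then have "x (cut t) \<le> x i" using x_antitone[of i "cut t"] i cut_in by simp
    then show "t \<le> x i" using cut_in by simp
  qed (use upper i in simp)
qed

lemma cut_bracket:
  assumes "x n < t" "t \<le> x 1"
  shows "x (Suc (cut t)) < t" "t \<le> x (cut t)"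
  using cut[OF assms] by (auto simp: not_le[symmetric])

lemma cut_antimono:
  assumes "x n < s" "s \<le> t" "t \<le> x 1"
  shows "cut t \<le> cut s"
proof -
  have t: "x n < t" "t \<le> x 1" using assms by auto
  have s: "x n < s" "s \<le> x 1" using assms by auto
  have "cut t \<in> {1..n}" using cut(1,2)[OF t] by simp
  moreover have "s \<le> x (cut t)" using cut_bracket(2)[OF t] assms(2) by simp
  ultimately show ?thesis using cut(3)[OF s] by blast
qed

lemma G_piece:
  assumes "x n < t" "t \<le> x 1"
  shows "G p t = (\<Sum>i=1..cut t. w i * (x i - t) ^ p)"
  unfolding G_def
proof (rule sum.mono_neutral_cong_right)
  show "{1..cut t} \<subseteq> {1..n}" using cut(2)[OF assms] by auto
  show "\<forall>i\<in>{1..n} - {1..cut t}. w i * trunc_pow p (x i) t = 0"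
    using cut(3)[OF assms] by (auto simp: trunc_pow_def)
  show "w i * trunc_pow p (x i) t = w i * (x i - t) ^ p" if "i \<in> {1..cut t}" for i
    using that cut[OF assms] by (auto simp: trunc_pow_def)
qed simp

lemma G0_piece: "x n < t \<Longrightarrow> t \<le> x 1 \<Longrightarrow> G 0 t = W (cut t)"
  using G_piece[of t 0] by (simp add: W_def)

lemma G1_piece: "x n < t \<Longrightarrow> t \<le> x 1 \<Longrightarrow> G 1 t = M1 (cut t) - W (cut t) * t"
  using G_piece[of t 1]
  by (simp add: W_def M1_def right_diff_distrib sum_subtractf sum_distrib_left mult.commute)

(* G_0 is the step function t \<mapsto> W (cut t), so its sign changes are sign changes of W. *)
lemma alt_chain_W_from_G0:
  assumes chain: "real_alt_chain (G 0) r" and r: "1 \<le> r"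
  shows "alt_chain W n r"
proof -
  obtain t where incr: "\<forall>l<r. t l < t (Suc l)" and alt: "alternating (\<lambda>l. G 0 (t l)) r"
    using chain unfolding real_alt_chain_def by blast
  have inside: "x n < t l \<and> t l \<le> x 1" if "l \<le> r" for l
    using G_support[OF _ alternating_nonzero[OF alt r that]] kpos by simp
  show ?thesis
  proof (rule alt_chain_reversed[where g = "G 0" and t = t and \<iota> = "\<lambda>l. cut (t l)", OF alt])
    show "1 \<le> cut (t l) \<and> cut (t l) \<le> n" if "l \<le> r" for l
      using cut(1,2)[OF inside[OF that, THEN conjunct1] inside[OF that, THEN conjunct2]] by simp
    show "cut (t (Suc l)) \<le> cut (t l)" if "l < r" for l
      using cut_antimono[of "t l" "t (Suc l)"] inside[of l] inside[of "Suc l"] incr that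
      by (simp add: less_imp_le)
    show "W (cut (t l)) * G 0 (t l) > 0" if "l \<le> r" for l
    proof -
      have "W (cut (t l)) = G 0 (t l)" using G0_piece[of "t l"] inside[OF that] by simp
      then show ?thesis using alternating_nonzero[OF alt r that] by (metis not_real_square_gt_zero)
    qed
  qed
qed

(* Each value of the piecewise affine G_1 is a convex combination of two consecutive C_m,
   one of which has its sign; so sign changes of G_1 are sign changes of C. *)
lemma alt_chain_C_from_G1:
  assumes chain: "real_alt_chain (G 1) r" and r: "1 \<le> r" and k: "2 \<le> k"
  shows "alt_chain C n r"
proof -
  obtain t where incr: "\<forall>l<r. t l < t (Suc l)" and alt: "alternating (\<lambda>l. G 1 (t l)) r"
    using chain unfolding real_alt_chain_def by blast
  have nonzero: "G 1 (t l) \<noteq> 0" if "l \<le> r" for l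
    using alternating_nonzero[OF alt r that] .
  have inside: "x n < t l" "t l \<le> x 1" if "l \<le> r" for l
    using G_support[OF _ nonzero[OF that]] k by auto
  define \<mu> where "\<mu> l = cut (t l)" for l
  \<comment> \<open>On the piece containing t_l, G_1 is the affine function s \<mapsto> M1 \<mu> - W \<mu> * s,
     whose values at the piece's end points x_\<mu> and x_(\<mu>+1) are C \<mu> and C (\<mu>+1).\<close>
  have G1: "G 1 (t l) = M1 (\<mu> l) - W (\<mu> l) * t l" if "l \<le> r" for l
    using G1_piece[OF inside[OF that]] by (simp add: \<mu>_def)
  have bracket: "x (Suc (\<mu> l)) < t l" "t l \<le> x (\<mu> l)" if "l \<le> r" for l
    using cut_bracket[OF inside[OF that]] by (simp_all add: \<mu>_def)
  define \<iota> where "\<iota> l = (if C (\<mu> l) * G 1 (t l) > 0 then \<mu> l else Suc (\<mu> l))" for l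
  show ?thesis
  proof (rule alt_chain_reversed[where g = "G 1" and t = t and \<iota> = \<iota>, OF alt])
    show "1 \<le> \<iota> l \<and> \<iota> l \<le> n" if "l \<le> r" for l
      using cut(1,2)[OF inside[OF that]] by (auto simp: \<iota>_def \<mu>_def)
    show "C (\<iota> l) * G 1 (t l) > 0" if l: "l \<le> r" for l
    proof (cases "C (\<mu> l) * G 1 (t l) > 0")
      case False
      have "(M1 (\<mu> l) - W (\<mu> l) * x (Suc (\<mu> l))) * (M1 (\<mu> l) - W (\<mu> l) * t l) > 0"
        by (rule affine_sign_at_left[where q = "x (\<mu> l)"])
          (use bracket[OF l] nonzero[OF l] G1[OF l] False C_eq[of "\<mu> l"] in auto)
      then show ?thesis using False G1[OF l] C_Suc[of "\<mu> l"] by (simp add: \<iota>_def)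
    qed (simp add: \<iota>_def)
    show "\<iota> (Suc l) \<le> \<iota> l" if l: "l < r" for l
    proof -
      have "\<mu> (Suc l) \<le> \<mu> l"
        unfolding \<mu>_def using cut_antimono[of "t l" "t (Suc l)"] inside[of l] inside[of "Suc l"] incr l
        by (simp add: less_imp_le)
      moreover have "\<not> C (\<mu> l) * G 1 (t l) > 0" if eq: "\<mu> (Suc l) = \<mu> l"
      proof
        assume same: "C (\<mu> l) * G 1 (t l) > 0"
        have step: "t l < t (Suc l)" using incr l by blast
        have "(M1 (\<mu> l) - W (\<mu> l) * t (Suc l)) * (M1 (\<mu> l) - W (\<mu> l) * t l) > 0"
          using affine_same_sign_between[of "t l" "x (\<mu> l)" "t (Suc l)" "M1 (\<mu> l)" "W (\<mu> l)"]
            same step l bracket[of "Suc l"] eq G1[of l] C_eq[of "\<mu> l"]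
          by (simp add: mult.commute)
        then have "G 1 (t l) * G 1 (t (Suc l)) > 0"
          using G1[of l] G1[of "Suc l"] eq l by (simp add: mult.commute)
        then show False using alt l unfolding alternating_def by (metis order_less_asym)
      qed
      ultimately show ?thesis by (cases "\<mu> (Suc l) = \<mu> l") (auto simp: \<iota>_def)
    qed
  qed
qed

lemma kernel_rolle:
  assumes p: "1 \<le> p" "Suc p < k" and chain: "real_alt_chain (G (Suc p)) r" and r: "1 \<le> r"
  shows "real_alt_chain (G p) (Suc r)"
proof (rule real_alt_chain_scale)
  show "real_alt_chain (\<lambda>t. - real (Suc p) * G p t) (Suc r)"
  proof (rule rolle_alternation[OF chain r G_deriv[OF p(1)]])
    show "G (Suc p) (x n) = 0" using G_zero_left p by simp
    show "G (Suc p) (x 1) = 0" using G_zero_at_top by simp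
    show "x n < t \<and> t < x 1" if "G (Suc p) t \<noteq> 0" for t
      using G_support[OF p(2) that] G_zero_at_top[of "Suc p"] that by (cases "t = x 1") auto
  qed
qed

lemma alt_chain_C_from_kernel:
  assumes "1 \<le> p" "p < k" "real_alt_chain (G p) r" "1 \<le> r"
  shows "alt_chain C n (r + p - 1)"
  using assms
proof (induction p arbitrary: r rule: dec_induct)
  case base
  then show ?case using alt_chain_C_from_G1 by simp
next
  case (step p)
  have "real_alt_chain (G p) (Suc r)" using kernel_rolle step.hyps step.prems by simp
  then show ?case using step.IH[of "Suc r"] step.prems by simp
qed

(* Summation by parts: C_(j+1) - C_j = W_j (x_j - x_(j+1)) with x_j \<ge> x_(j+1), and C_1 = C_n = 0. *)
lemma alt_chain_W_from_C:
  assumes k: "2 \<le> k" and chain: "alt_chain C n m" and m: "1 \<le> m"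
  shows "alt_chain W n (Suc m)"
proof -
  obtain idx where range: "\<And>l. l \<le> m \<Longrightarrow> 1 \<le> idx l \<and> idx l \<le> n"
    and incr: "\<And>l. l < m \<Longrightarrow> idx l < idx (Suc l)" and alt: "alternating (\<lambda>l. C (idx l)) m"
    using chain unfolding alt_chain_def alternating_def by blast
  have C_incr: "C (Suc j) - C j = W j * (x j - x (Suc j))" for j
    unfolding C_Suc C_eq[of j] by (simp add: algebra_simps)
  have x_decr: "x j - x (Suc j) \<ge> 0" if "1 \<le> j" "j < n" for j
    using x_antitone[of j "Suc j"] that by simp
  have C1: "C 1 = 0" by (simp add: C_def)
  have Cn: "C n = 0" using moments[of 0] moments[of 1] k by (simp add: C_def)
  obtain idx' where range': "\<And>l. l \<le> Suc m \<Longrightarrow> 1 \<le> idx' l \<and> idx' l < n"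
    and incr': "\<And>l. l < Suc m \<Longrightarrow> idx' l < idx' (Suc l)"
    and alt': "alternating (\<lambda>l. W (idx' l)) (Suc m)"
    by (rule discrete_rolle_alternation[OF C_incr x_decr C1 Cn range incr alt m]) auto
  show ?thesis unfolding alt_chain_def
    by (intro exI[of _ idx'] conjI allI impI)
      (use range' incr' alt' in \<open>auto simp: alternating_def less_imp_le\<close>)
qed

(* W_(j+1) - W_j = w_(j+1) and W_0 = W_n = 0. *)
lemma alt_chain_w_from_W:
  assumes chain: "alt_chain W n m" and m: "1 \<le> m"
  shows "alt_chain w n (Suc m)"
proof -
  obtain idx where range: "\<And>l. l \<le> m \<Longrightarrow> 0 \<le> idx l \<and> idx l \<le> n"
    and incr: "\<And>l. l < m \<Longrightarrow> idx l < idx (Suc l)" and alt: "alternating (\<lambda>l. W (idx l)) m"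
    using chain unfolding alt_chain_def alternating_def by blast
  have W_incr: "W (Suc j) - W j = w (Suc j) * 1" for j by (simp add: W_def)
  have W0: "W 0 = 0" by (simp add: W_def)
  have Wn: "W n = 0" using moments[of 0] kpos by (simp add: W_def)
  obtain idx' where range': "\<And>l. l \<le> Suc m \<Longrightarrow> 0 \<le> idx' l \<and> idx' l < n"
    and incr': "\<And>l. l < Suc m \<Longrightarrow> idx' l < idx' (Suc l)"
    and alt': "alternating (\<lambda>l. w (Suc (idx' l))) (Suc m)"
    by (rule discrete_rolle_alternation[OF W_incr _ W0 Wn range incr alt m]) auto
  show ?thesis unfolding alt_chain_def
    by (intro exI[of _ "\<lambda>l. Suc (idx' l)"] conjI allI impI)
      (use range' incr' alt' in \<open>auto simp: alternating_def Suc_le_eq\<close>)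
qed

(* Under any of the three sign-change hypotheses the kernel G_(k-1) is nonnegative: a negative
   value would propagate to too many sign changes of C, W or w. *)
lemma G_top_nonneg:
  assumes cond: "sign_changes w n \<le> k \<or> sign_changes W n \<le> k - 1
                 \<or> int (sign_changes C n) \<le> int k - 2"
  shows "G (k - 1) t \<ge> 0"
proof (rule ccontr)
  assume "\<not> G (k - 1) t \<ge> 0"
  then have chain: "real_alt_chain (G (k - 1)) 1"
    using real_alt_chain_one[of "G (k - 1)" t, OF _ G_pos_near_top] by simp
  show False
  proof (cases "k = 1")
    case True
    have W: "alt_chain W n 1" using alt_chain_W_from_G0[of 1] chain True by simp
    have "alt_chain w n 2" using alt_chain_w_from_W[OF W] by (simp add: numeral_2_eq_2)
    then show False using sign_changes_ge[OF W] sign_changes_ge[of w n 2] cond True by simp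
  next
    case False
    then have k: "2 \<le> k" using kpos by simp
    have C: "alt_chain C n (k - 1)" using alt_chain_C_from_kernel[of "k - 1" 1] chain k by simp
    have W: "alt_chain W n k" using alt_chain_W_from_C[OF k C] k by simp
    have w: "alt_chain w n (Suc k)" using alt_chain_w_from_W[OF W] k by simp
    show False using sign_changes_ge[OF W] sign_changes_ge[OF w] sign_changes_ge[OF C] cond k
      by auto
  qed
qed

end

(* The weighted sum is the integral of the nonnegative kernel G_(k-1) against f^(k) \<ge> 0. *)
theorem mainTheorem5:
  fixes a b :: real and n k :: nat and x w :: "nat \<Rightarrow> real"
  assumes n2: "n \<ge> 2"
    and strict: "x 1 > x 2"
    and mono: "\<And>i. 2 \<le> i \<Longrightarrow> i < n \<Longrightarrow> x i \<ge> x (Suc i)"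
    and range: "\<And>i. 1 \<le> i \<Longrightarrow> i \<le> n \<Longrightarrow> x i \<in> {a..b}"
    and w1: "w 1 > 0"
    and kpos: "k \<ge> 1"
    and moments: "\<And>j. j < k \<Longrightarrow> (\<Sum>i=1..n. w i * x i ^ j) = 0"
    and cond: "sign_changes w n \<le> k
             \<or> sign_changes (\<lambda>m. \<Sum>i=1..m. w i) n \<le> k - 1
             \<or> int (sign_changes (\<lambda>m. (\<Sum>i=1..m. w i * x i) - (\<Sum>i=1..m. w i) * x m) n)
                 \<le> int k - 2"
    and D0: "D 0 = f"
    and Dderiv: "\<And>j t. j < k \<Longrightarrow> t \<in> {a..b} \<Longrightarrow>
                   (D j has_real_derivative D (Suc j) t) (at t within {a..b})"
    and Dk: "\<And>t. t \<in> {a..b} \<Longrightarrow> D k t \<ge> 0"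
  shows "(\<Sum>i=1..n. w i * f (x i)) \<ge> 0"
proof -
  interpret nodes: ordered_weighted_nodes n k x w
    by unfold_locales (use n2 strict mono w1 kpos moments in auto)
  have integral: "((\<lambda>t. nodes.G (k - 1) t * D k t / fact (k - 1))
                     has_integral (\<Sum>i=1..n. w i * f (x i))) {a..b}"
    unfolding nodes.G_def
    by (rule peano_kernel_representation[OF _ kpos _ moments D0 Dderiv]) (use range in auto)
  have kernel_nonneg: "nodes.G (k - 1) t \<ge> 0" for t
    using nodes.G_top_nonneg cond unfolding nodes.W_def nodes.C_def by blast
  show ?thesis
    by (rule has_integral_nonneg[OF integral]) (use kernel_nonneg Dk in simp)
qed

end
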